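(* Let $K=\operatorname{cone}\{e_1,\dots,e_m\}\subset\mathbb{R}^m$ be a simplicial cone and $L$ a proper cone such that $K$ is an $L$-isotone projection set. Then there exists an index set $I\subset\{1,\dots,m\}$, with complement $I^c$, such that $\langle e_i,e_j\rangle\ge0$ for all $i,j\in I$, $\langle e_k,e_\ell\rangle\ge0$ for all $k,\ell\in I^c$, and $\langle e_i,e_k\rangle\le0$ for all $i\in I$, $k\in I^c$.
   Context: $\mathbb{R}^m$ carries the standard inner product. A simplicial cone is $\operatorname{cone}\{e_1,\dots,e_m\}=\{\sum t^ie_i:t^i\ge0\}$ with $e_1,\dots,e_m$ linearly independent. A proper cone is a closed convex cone $L$ that is pointed ($L\cap(-L)=\{0\}$) and generating ($L-L=\mathbb{R}^m$). $x\le_L y$ means $y-x\in L$. $K$ is an $L$-isotone projection set if $x\le_L y$ implies $P_Kx\le_L P_Ky$, where $P_K$ is the metric projection onto $K$. *)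

theory Defs
  imports "HOL-Analysis.Analysis"
begin

definition simplicial_cone :: "('n::finite \<Rightarrow> real^'n) \<Rightarrow> (real^'n) set" where
  "simplicial_cone e = {(\<Sum>i\<in>UNIV. t i *\<^sub>R e i) | t. \<forall>i. 0 \<le> t i}"

definition lin_indep_family :: "('n::finite \<Rightarrow> real^'n) \<Rightarrow> bool" where
  "lin_indep_family e \<longleftrightarrow> (\<forall>c. (\<Sum>i\<in>UNIV. c i *\<^sub>R e i) = 0 \<longrightarrow> (\<forall>i. c i = 0))"

definition proper_cone :: "(real^'n) set \<Rightarrow> bool" where
  "proper_cone L \<longleftrightarrow> closed L \<and> convex_cone L \<and> L \<inter> uminus ` L = {0}
     \<and> {x - y | x y. x \<in> L \<and> y \<in> L} = UNIV"

definition cone_le :: "(real^'n) set \<Rightarrow> real^'n \<Rightarrow> real^'n \<Rightarrow> bool" where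
  "cone_le L x y \<longleftrightarrow> y - x \<in> L"

definition isotone_projection_set :: "(real^'n) set \<Rightarrow> (real^'n) set \<Rightarrow> bool" where
  "isotone_projection_set L K \<longleftrightarrow>
     (\<forall>x y. cone_le L x y \<longrightarrow> cone_le L (closest_point K x) (closest_point K y))"

end

theory Submission
  imports Defs
begin

text \<open>
  The key observation is that for every \<open>l \<in> L\<close> the vector \<open>(l \<bullet> e\<^sub>i) e\<^sub>i\<close> lies in \<open>L\<close>.
  Choose \<open>n\<close> with \<open>n \<bullet> e\<^sub>i = 0\<close> and \<open>n \<bullet> e\<^sub>j = -1\<close> for \<open>j \<noteq> i\<close>: then \<open>e\<^sub>i + n\<close> projects
  onto \<open>e\<^sub>i\<close>, and for small \<open>\<epsilon> > 0\<close> the point \<open>e\<^sub>i + n + \<epsilon> l\<close>, which dominates it,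
  still projects onto the ray through \<open>e\<^sub>i\<close>, namely onto \<open>(1 + \<epsilon> a) e\<^sub>i\<close> where
  \<open>a e\<^sub>i\<close> is the component of \<open>l\<close> along \<open>e\<^sub>i\<close>. Isotonicity gives \<open>\<epsilon> a e\<^sub>i \<in> L\<close>.
  Since \<open>L\<close> is generating, some \<open>l \<in> L\<close> has \<open>l \<bullet> e\<^sub>i \<noteq> 0\<close>, so \<open>e\<^sub>i\<close> or \<open>-e\<^sub>i\<close> lies in \<open>L\<close>,
  and pointedness then forces all of \<open>L\<close> to lie on the corresponding side of \<open>e\<^sub>i\<^sup>\<bottom>\<close>.
  The index set is \<open>I = {i. e\<^sub>i \<in> L}\<close>.
\<close>

lemma closest_point_eqI:
  fixes S :: "'a::euclidean_space set"
  assumes p: "p \<in> S" and obtuse: "\<forall>y\<in>S. (a - p) \<bullet> (y - p) \<le> 0"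
  shows "closest_point S a = p"
proof -
  have pythagoras: "dist a p ^ 2 + dist p y ^ 2 \<le> dist a y ^ 2" if "y \<in> S" for y
  proof -
    have "(a - p) - (y - p) = a - y" by simp
    then have "(a - p) \<bullet> (y - p) = (dist a p ^ 2 + dist p y ^ 2 - dist a y ^ 2) / 2"
      using dot_norm_neg[of "a - p" "y - p"] unfolding dist_norm norm_minus_commute[of p y] by simp
    then show ?thesis using obtuse that by auto
  qed
  have nearest: "dist a p \<le> dist a y" if "y \<in> S" for y
  proof (rule power2_le_imp_le)
    show "dist a p ^ 2 \<le> dist a y ^ 2"
      using pythagoras[OF that] zero_le_power2[of "dist p y"] by linarith
  qed simp
  define q where "q = closest_point S a"
  have q: "q \<in> S \<and> (\<forall>y\<in>S. dist a q \<le> dist a y)"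
    unfolding q_def closest_point_def by (rule someI[of _ p]) (use p nearest in blast)
  then have "dist a q ^ 2 \<le> dist a p ^ 2"
    using p by (simp add: power_mono)
  with pythagoras[of q] q have "dist p q ^ 2 \<le> 0" by linarith
  then show ?thesis by (simp add: q_def)
qed

lemma lin_indep_family_nonzero:
  assumes "lin_indep_family e"
  shows "e i \<noteq> 0"
proof
  assume "e i = 0"
  then have "(\<Sum>j\<in>UNIV. (if j = i then 1 else 0) *\<^sub>R e j) = 0"
    by (simp add: if_distrib[of "\<lambda>s. s *\<^sub>R _"] sum.delta cong: if_cong)
  with assms show False
    unfolding lin_indep_family_def by (metis (mono_tags) zero_neq_one)
qed

lemma lin_indep_family_dual_vector:
  fixes e :: "'n::finite \<Rightarrow> real^'n"
  assumes li: "lin_indep_family e"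
  obtains x where "\<And>j. x \<bullet> e j = b j"
proof -
  define g where "g = (\<lambda>c::real^'n. \<Sum>i\<in>UNIV. c $ i *\<^sub>R e i)"
  define h where "h = (\<lambda>x::real^'n. \<chi> j. x \<bullet> e j)"
  have lin_g: "linear g" unfolding g_def
    by (rule linearI) (simp_all add: scaleR_add_left sum.distrib scaleR_sum_right)
  have "inj g"
    unfolding linear_injective_0[OF lin_g]
  proof (intro allI impI)
    fix c assume "g c = 0"
    then have "\<forall>i. c $ i = 0" using li unfolding lin_indep_family_def g_def by blast
    then show "c = 0" by (simp add: vec_eq_iff)
  qed
  then have surj_g: "surj g" using lin_g eucl.linear_inj_imp_surj by blast
  have lin_h: "linear h" unfolding h_def
    by (rule linearI) (auto simp: vec_eq_iff inner_add_left)
  have "inj h"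
    unfolding linear_injective_0[OF lin_h]
  proof (intro allI impI)
    fix x assume hx: "h x = 0"
    obtain c where x: "x = g c" using surj_g by (metis surjD)
    have "x \<bullet> x = (\<Sum>i\<in>UNIV. c $ i * (x \<bullet> e i))"
      by (subst (2) x) (simp add: g_def inner_sum_right)
    also have "\<dots> = 0" using hx by (simp add: h_def vec_eq_iff)
    finally show "x = 0" by simp
  qed
  then have "surj h" using lin_h eucl.linear_inj_imp_surj by blast
  then obtain x where "(\<chi> j. b j) = h x" by (metis surjD)
  then show ?thesis by (intro that[of x]) (simp add: h_def vec_eq_iff)
qed

lemma scaled_generator_in_simplicial_cone:
  assumes "c \<ge> 0"
  shows "c *\<^sub>R e i \<in> simplicial_cone e"
  unfolding simplicial_cone_def
proof (intro CollectI exI conjI)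
  show "c *\<^sub>R e i = (\<Sum>j\<in>UNIV. (if j = i then c else 0) *\<^sub>R e j)"
    by (simp add: if_distrib[of "\<lambda>s. s *\<^sub>R _"] sum.delta cong: if_cong)
qed (use assms in simp)

lemma closest_point_simplicial_cone_ray:
  fixes e :: "'n::finite \<Rightarrow> real^'n"
  assumes "c \<ge> 0" and "w \<bullet> e i = 0" and "\<And>j. w \<bullet> e j \<le> 0"
  shows "closest_point (simplicial_cone e) (c *\<^sub>R e i + w) = c *\<^sub>R e i"
proof (rule closest_point_eqI)
  show "c *\<^sub>R e i \<in> simplicial_cone e"
    using assms(1) by (rule scaled_generator_in_simplicial_cone)
  show "\<forall>y\<in>simplicial_cone e. (c *\<^sub>R e i + w - c *\<^sub>R e i) \<bullet> (y - c *\<^sub>R e i) \<le> 0"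
  proof
    fix y assume "y \<in> simplicial_cone e"
    then obtain t where y: "y = (\<Sum>j\<in>UNIV. t j *\<^sub>R e j)" and t: "\<And>j. 0 \<le> t j"
      unfolding simplicial_cone_def by blast
    have "w \<bullet> y = (\<Sum>j\<in>UNIV. t j * (w \<bullet> e j))"
      by (simp add: y inner_sum_right)
    also have "\<dots> \<le> 0"
      by (rule sum_nonpos) (simp add: t assms(3) mult_nonneg_nonpos)
    finally show "(c *\<^sub>R e i + w - c *\<^sub>R e i) \<bullet> (y - c *\<^sub>R e i) \<le> 0"
      by (simp add: inner_diff_right assms(2))
  qed
qed

lemma finite_reals_small_scale:
  fixes A :: "real set"
  assumes "finite A"
  obtains \<epsilon> where "\<epsilon> > 0" and "\<And>x. x \<in> A \<Longrightarrow> \<epsilon> * \<bar>x\<bar> \<le> 1"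
proof
  define M where "M = 1 + (\<Sum>x\<in>A. \<bar>x\<bar>)"
  have M: "M \<ge> 1" by (simp add: M_def sum_nonneg)
  then show "1 / M > 0" by simp
  fix x assume "x \<in> A"
  then have "\<bar>x\<bar> \<le> M"
    using member_le_sum[of x A abs] assms by (simp add: M_def)
  with M show "1 / M * \<bar>x\<bar> \<le> 1" by simp
qed

lemma isotone_projection_simplicial_cone_axis:
  fixes e :: "'n::finite \<Rightarrow> real^'n" and L :: "(real^'n) set"
  assumes li: "lin_indep_family e" and "conic L"
    and iso: "isotone_projection_set L (simplicial_cone e)"
    and l: "l \<in> L"
  shows "(l \<bullet> e i) *\<^sub>R e i \<in> L"
proof -
  let ?P = "closest_point (simplicial_cone e)"
  have ei: "e i \<bullet> e i > 0" using lin_indep_family_nonzero[OF li] by simp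
  obtain n where n: "\<And>j. n \<bullet> e j = (if j = i then 0 else -1)"
    using lin_indep_family_dual_vector[OF li, of "\<lambda>j. if j = i then 0 else -1"] by blast
  define a where "a = (l \<bullet> e i) / (e i \<bullet> e i)"
  define r where "r = l - a *\<^sub>R e i"
  have r: "r \<bullet> e i = 0" using ei by (simp add: r_def a_def inner_diff_left)
  define A where "A = insert a (range (\<lambda>j. r \<bullet> e j))"
  obtain \<epsilon> where \<epsilon>: "\<epsilon> > 0" and small: "\<And>x. x \<in> A \<Longrightarrow> \<epsilon> * \<bar>x\<bar> \<le> 1"
    using finite_reals_small_scale[of A] by (auto simp: A_def)
  have bound: "\<bar>\<epsilon> * x\<bar> \<le> 1" if "x \<in> A" for x
    using small[OF that] \<epsilon> by (simp add: abs_mult)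
  have below: "?P (1 *\<^sub>R e i + n) = 1 *\<^sub>R e i"
    by (rule closest_point_simplicial_cone_ray) (simp_all add: n)
  have above: "?P ((1 + \<epsilon> * a) *\<^sub>R e i + (n + \<epsilon> *\<^sub>R r)) = (1 + \<epsilon> * a) *\<^sub>R e i"
  proof (rule closest_point_simplicial_cone_ray)
    show "0 \<le> 1 + \<epsilon> * a" using bound[of a] by (simp add: A_def abs_le_iff)
    show "(n + \<epsilon> *\<^sub>R r) \<bullet> e i = 0" by (simp add: n r inner_add_left)
    show "(n + \<epsilon> *\<^sub>R r) \<bullet> e j \<le> 0" for j
      using bound[of "r \<bullet> e j"] by (simp add: A_def abs_le_iff n r inner_add_left)
  qed
  have "(1 + \<epsilon> * a) *\<^sub>R e i + (n + \<epsilon> *\<^sub>R r) - (1 *\<^sub>R e i + n) = \<epsilon> *\<^sub>R l"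
    by (simp add: r_def algebra_simps)
  then have "cone_le L (1 *\<^sub>R e i + n) ((1 + \<epsilon> * a) *\<^sub>R e i + (n + \<epsilon> *\<^sub>R r))"
    unfolding cone_le_def using conic_mul[OF \<open>conic L\<close> l, of \<epsilon>] \<epsilon> by simp
  from iso[unfolded isotone_projection_set_def, rule_format, OF this]
  have "cone_le L (1 *\<^sub>R e i) ((1 + \<epsilon> * a) *\<^sub>R e i)"
    unfolding below above .
  then have "(\<epsilon> * a) *\<^sub>R e i \<in> L"
    unfolding cone_le_def by (simp add: scaleR_left_distrib)
  from conic_mul[OF \<open>conic L\<close> this, of "(e i \<bullet> e i) / \<epsilon>"]
  have "((e i \<bullet> e i) / \<epsilon>) *\<^sub>R ((\<epsilon> * a) *\<^sub>R e i) \<in> L"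
    using \<epsilon> ei by simp
  moreover have "(e i \<bullet> e i) / \<epsilon> * (\<epsilon> * a) = l \<bullet> e i"
    using \<epsilon> ei by (simp add: a_def)
  ultimately show ?thesis by simp
qed

lemma proper_cone_pointed:
  assumes "proper_cone L" and "x \<in> L" and "- x \<in> L"
  shows "x = 0"
proof -
  have "x \<in> L \<inter> uminus ` L" using assms(2,3) by (metis IntI image_eqI minus_minus)
  then show ?thesis using assms(1) unfolding proper_cone_def by blast
qed

lemma conic_axis_sign:
  assumes "conic L" and "(c *\<^sub>R v) \<in> L"
  shows "c > 0 \<Longrightarrow> v \<in> L" and "c < 0 \<Longrightarrow> - v \<in> L"
  using conic_mul[OF assms, of "1 / c"] conic_mul[OF assms, of "- 1 / c"] by simp_all

lemma proper_cone_axis_dichotomy: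
  assumes L: "proper_cone L" and v: "v \<noteq> 0"
    and axis: "\<And>l. l \<in> L \<Longrightarrow> (l \<bullet> v) *\<^sub>R v \<in> L"
  shows "v \<in> L \<Longrightarrow> l \<in> L \<Longrightarrow> 0 \<le> l \<bullet> v"
    and "v \<notin> L \<Longrightarrow> - v \<in> L"
    and "v \<notin> L \<Longrightarrow> l \<in> L \<Longrightarrow> l \<bullet> v \<le> 0"
proof -
  have conic: "conic L" using L by (simp add: proper_cone_def convex_cone_def)
  note sign = conic_axis_sign[OF conic axis]
  show "0 \<le> l \<bullet> v" if "v \<in> L" "l \<in> L"
  proof (rule ccontr)
    assume "\<not> 0 \<le> l \<bullet> v"
    then have "- v \<in> L" using sign(2)[OF \<open>l \<in> L\<close>] by simp
    with \<open>v \<in> L\<close> v show False using proper_cone_pointed[OF L] by blast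
  qed
  show "- v \<in> L" if "v \<notin> L"
  proof -
    have "v \<in> {x - y | x y. x \<in> L \<and> y \<in> L}" using L by (simp add: proper_cone_def)
    then obtain x y where "v = x - y" "x \<in> L" "y \<in> L" by blast
    have "v \<bullet> v = x \<bullet> v - y \<bullet> v" by (metis \<open>v = x - y\<close> inner_diff_left)
    then have "x \<bullet> v \<noteq> 0 \<or> y \<bullet> v \<noteq> 0" using v by auto
    then obtain l where l: "l \<in> L" "l \<bullet> v \<noteq> 0" using \<open>x \<in> L\<close> \<open>y \<in> L\<close> by blast
    show ?thesis
    proof (cases "l \<bullet> v > 0")
      case True
      with sign(1)[OF l(1)] that show ?thesis by blast
    next
      case False
      with sign(2)[OF l(1)] l(2) show ?thesis by simp
    qed
  qed
  show "l \<bullet> v \<le> 0" if "v \<notin> L" "l \<in> L"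
    using sign(1)[OF \<open>l \<in> L\<close>] that(1) by fastforce
qed

theorem proposition3:
  fixes e :: "'n::finite \<Rightarrow> real^'n" and L :: "(real^'n) set"
  assumes "lin_indep_family e"
    and "proper_cone L"
    and "isotone_projection_set L (simplicial_cone e)"
  shows "\<exists>I::'n set.
           (\<forall>i\<in>I. \<forall>j\<in>I. e i \<bullet> e j \<ge> 0) \<and>
           (\<forall>k\<in>-I. \<forall>l\<in>-I. e k \<bullet> e l \<ge> 0) \<and>
           (\<forall>i\<in>I. \<forall>k\<in>-I. e i \<bullet> e k \<le> 0)"
proof -
  have "conic L" using assms(2) by (simp add: proper_cone_def convex_cone_def)
  note axis = isotone_projection_simplicial_cone_axis[OF assms(1) \<open>conic L\<close> assms(3)]
  note side = proper_cone_axis_dichotomy[OF assms(2) lin_indep_family_nonzero[OF assms(1)] axis]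
  show ?thesis
  proof (intro exI[of _ "{i. e i \<in> L}"] conjI ballI)
    fix i j assume "i \<in> {i. e i \<in> L}" "j \<in> {i. e i \<in> L}"
    then show "e i \<bullet> e j \<ge> 0" using side(1) by simp
  next
    fix k l assume "k \<in> - {i. e i \<in> L}" "l \<in> - {i. e i \<in> L}"
    then have "(- e k) \<bullet> e l \<le> 0" using side(2)[of k] side(3)[of l "- e k"] by simp
    then show "e k \<bullet> e l \<ge> 0" by simp
  next
    fix i k assume "i \<in> {i. e i \<in> L}" "k \<in> - {i. e i \<in> L}"
    then show "e i \<bullet> e k \<le> 0" using side(3) by simp
  qed
qed

end
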